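(* Let $\mu$ be a positive finite Borel measure on $\mathbb{R}^d$ and $0\le\alpha\le d$, and assume $$\liminf_{r\to\infty}\frac{1}{r^{d-\alpha}}\int_{|t|<r}|\widehat{\mu}(t)|^2\,dt>0.$$ Let $\Lambda\subset\mathbb{R}^d$ be countable and suppose $E(\Lambda)$ is a Bessel system in $L^2(\mu)$. Then there is a constant $C$ such that $$\sup_{x\in\mathbb{R}^d}\#\big(\Lambda\cap B(x,r)\big)\le C r^\alpha\quad\text{for all } r\ge 1.$$
   Context: $\widehat{\mu}(t)=\int_{\mathbb{R}^d}e^{-2\pi i\langle t,x\rangle}d\mu(x)$. For $\lambda\in\mathbb{R}^d$, $e_\lambda(x)=e^{2\pi i\langle\lambda,x\rangle}$ and $E(\Lambda)=\{e_\lambda\}_{\lambda\in\Lambda}$. A system $\{f_n\}$ in a Hilbert space $H$ is a Bessel system if there is $C>0$ with $\sum_n|\langle f,f_n\rangle|^2\le C\|f\|^2$ for all $f\in H$. $B(x,r)$ is the open ball of radius $r$ centered at $x$. *)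

theory Defs
  imports "HOL-Analysis.Analysis"
begin

definition fourier_measure :: "'a::euclidean_space measure \<Rightarrow> 'a \<Rightarrow> complex" where
  "fourier_measure \<mu> t = (LINT x|\<mu>. cis (- 2 * pi * (t \<bullet> x)))"

definition expo :: "'a::euclidean_space \<Rightarrow> 'a \<Rightarrow> complex" where
  "expo l x = cis (2 * pi * (l \<bullet> x))"

definition L2 :: "'a measure \<Rightarrow> ('a \<Rightarrow> complex) set" where
  "L2 \<mu> = {f. f \<in> borel_measurable \<mu> \<and> integrable \<mu> (\<lambda>x. (cmod (f x))\<^sup>2)}"

definition L2_inner :: "'a measure \<Rightarrow> ('a \<Rightarrow> complex) \<Rightarrow> ('a \<Rightarrow> complex) \<Rightarrow> complex" where
  "L2_inner \<mu> f g = (LINT x|\<mu>. f x * cnj (g x))"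

definition L2_norm_sq :: "'a measure \<Rightarrow> ('a \<Rightarrow> complex) \<Rightarrow> real" where
  "L2_norm_sq \<mu> f = (LINT x|\<mu>. (cmod (f x))\<^sup>2)"

definition bessel_system :: "'a::euclidean_space measure \<Rightarrow> 'a set \<Rightarrow> bool" where
  "bessel_system \<mu> \<Lambda> \<longleftrightarrow> (\<exists>C>0. \<forall>f\<in>L2 \<mu>.
      (\<Sum>\<^sub>\<infinity>l\<in>\<Lambda>. ennreal ((cmod (L2_inner \<mu> f (expo l)))\<^sup>2)) \<le> ennreal (C * L2_norm_sq \<mu> f))"

end

theory Submission
  imports Defs
begin

text \<open>Write \<open>\<mu>\<^sup>^\<close> for the Fourier transform of \<open>\<mu>\<close>. Testing the Bessel inequality
  on the exponential \<open>e\<^sub>x\<close> itself bounds \<open>\<Sum>\<^sub>\<lambda>\<^sub>\<in>\<^sub>\<Lambda> |\<mu>\<^sup>^(\<lambda> - x)|\<^sup>2\<close> by \<open>C \<mu>(\<real>\<^sup>d)\<close>,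
  uniformly in \<open>x\<close>. Integrate this over \<open>x \<in> B(y, 2r)\<close>: every \<open>\<lambda> \<in> \<Lambda> \<inter> B(y, r)\<close>
  contributes at least \<open>\<integral>\<^sub>|\<^sub>t\<^sub>|\<^sub><\<^sub>r |\<mu>\<^sup>^(t)|\<^sup>2\<close>, which is \<open>\<ge> c r\<^sup>d\<^sup>-\<^sup>\<alpha>\<close> for large \<open>r\<close>,
  while the total is at most \<open>C \<mu>(\<real>\<^sup>d) |B(y, 2r)| = O(r\<^sup>d)\<close>. Hence \<open>#(\<Lambda> \<inter> B(y, r)) = O(r\<^sup>\<alpha>)\<close>
  for large \<open>r\<close>, and monotonicity in \<open>r\<close> handles the remaining radii \<open>r \<ge> 1\<close>.\<close>

lemma finite_card_le_if_finite_subsets_card_le: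
  fixes b :: real
  assumes "\<And>G. G \<subseteq> A \<Longrightarrow> finite G \<Longrightarrow> real (card G) \<le> b"
  shows "finite A \<and> real (card A) \<le> b"
proof -
  have "finite A \<and> card A \<le> nat \<lfloor>b\<rfloor>"
    by (rule finite_if_finite_subsets_card_bdd) (use assms in \<open>fastforce simp: le_nat_floor\<close>)
  moreover have "real (nat \<lfloor>b\<rfloor>) \<le> b"
    using assms[of "{}"] by simp
  ultimately show ?thesis
    by (meson of_nat_le_iff order.trans)
qed

lemma powr_count_bound_if_eventually:
  fixes A :: "'a::metric_space set" and \<alpha> K R :: real
  assumes "0 \<le> \<alpha>"
    and large: "\<And>r x. r \<ge> R \<Longrightarrow> finite (A \<inter> ball x r) \<and> real (card (A \<inter> ball x r)) \<le> K * r powr \<alpha>"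
  shows "\<exists>C. \<forall>r\<ge>1. \<forall>x. finite (A \<inter> ball x r) \<and> real (card (A \<inter> ball x r)) \<le> C * r powr \<alpha>"
proof (intro exI allI impI)
  define R' where "R' = max R 1"
  have R': "R' \<ge> R" "1 \<le> R' powr \<alpha>" "R' \<ge> 1"
    using \<open>0 \<le> \<alpha>\<close> by (auto simp: R'_def ge_one_powr_ge_zero)
  have "0 \<le> K * R' powr \<alpha>"
    using large[OF R'(1)] by (meson of_nat_0_le_iff order.trans)
  then have K: "K \<ge> 0"
    using R' by (simp add: zero_le_mult_iff)
  fix r :: real and x :: 'a
  assume r: "r \<ge> 1"
  have r_pow: "1 \<le> r powr \<alpha>"
    using r \<open>0 \<le> \<alpha>\<close> by (simp add: ge_one_powr_ge_zero)
  show "finite (A \<inter> ball x r) \<and> real (card (A \<inter> ball x r)) \<le> K * R' powr \<alpha> * r powr \<alpha>"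
  proof (cases "r \<ge> R'")
    case True
    have "K * r powr \<alpha> \<le> K * R' powr \<alpha> * r powr \<alpha>"
      using mult_right_mono[OF mult_left_mono[OF R'(2) K], of "r powr \<alpha>"] by simp
    then show ?thesis
      using large[of r x] True R'(1) by auto
  next
    case False
    have sub: "A \<inter> ball x r \<subseteq> A \<inter> ball x R'"
      using False by auto
    have "real (card (A \<inter> ball x r)) \<le> card (A \<inter> ball x R')"
      using large[OF R'(1)] sub by (simp add: card_mono)
    also have "\<dots> \<le> K * R' powr \<alpha> * r powr \<alpha>"
      using large[OF R'(1), of x] mult_left_mono[OF r_pow, of "K * R' powr \<alpha>"] K by simp
    finally show ?thesis
      using large[OF R'(1), of x] sub finite_subset by blast
  qed
qed

lemma nn_integral_lborel_reflect:
  fixes h :: "'a::euclidean_space \<Rightarrow> ennreal"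
  assumes [measurable]: "h \<in> borel_measurable borel"
  shows "(\<integral>\<^sup>+x. h (l - x) \<partial>lborel) = (\<integral>\<^sup>+t. h t \<partial>lborel)"
proof -
  have distr_reflect: "distr lborel borel (\<lambda>x::'a. l - x) = lborel"
    using lborel_affine[of "-1" l] by (simp add: density_1)
  have "(\<integral>\<^sup>+t. h t \<partial>lborel) = (\<integral>\<^sup>+t. h t \<partial>distr lborel borel (\<lambda>x::'a. l - x))"
    by (simp only: distr_reflect)
  also have "\<dots> = (\<integral>\<^sup>+x. h (l - x) \<partial>lborel)"
    by (simp add: nn_integral_distr)
  finally show ?thesis ..
qed

lemma indicator_ball_diff_le_indicator_double_ball:
  fixes l x y :: "'a::real_normed_vector"
  assumes "l \<in> ball y r"
  shows "indicator (ball 0 r) (l - x) \<le> (indicator (ball y (2 * r)) x :: real)"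
proof (cases "l - x \<in> ball 0 r")
  case True
  then have "dist l x < r"
    by (simp add: dist_norm norm_minus_commute)
  then have "x \<in> ball y (2 * r)"
    using assms dist_triangle[of y x l] by simp
  then show ?thesis
    by simp
qed simp

lemma card_mult_integral_ball_le_of_translate_sums_le:
  fixes g :: "'a::euclidean_space \<Rightarrow> real"
  assumes g_meas [measurable]: "g \<in> borel_measurable borel" and g_nonneg: "\<And>t. g t \<ge> 0"
    and sums_le: "\<And>x. (\<Sum>l\<in>F. g (l - x)) \<le> K"
    and F: "finite F" "F \<subseteq> ball y r"
  shows "real (card F) * (LINT t:ball 0 r|lborel. g t) \<le> K * measure lborel (ball y (2 * r))"
proof -
  have K_nonneg: "K \<ge> 0"
    using sums_le[of 0] g_nonneg sum_nonneg order.trans by metis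
  show ?thesis
  proof (cases "set_integrable lborel (ball 0 r) g")
    case False
    then show ?thesis
      using K_nonneg
      by (simp add: set_lebesgue_integral_def set_integrable_def not_integrable_integral_eq)
  next
    case True
    define I where "I = (LINT t:ball 0 r|lborel. g t)"
    define B where "B = ball y (2 * r)"
    have I_nonneg: "I \<ge> 0"
      unfolding I_def set_lebesgue_integral_def by (simp add: g_nonneg)
    have I_nn_integral: "ennreal I = (\<integral>\<^sup>+t. ennreal (indicator (ball 0 r) t * g t) \<partial>lborel)"
      using True unfolding I_def set_lebesgue_integral_def set_integrable_def
      by (subst nn_integral_eq_integral) (auto simp: g_nonneg)
    have "ennreal (real (card F) * I) = (\<Sum>l\<in>F. ennreal I)"
      using I_nonneg by (simp add: ennreal_mult ennreal_of_nat_eq_real_of_nat)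
    also have "\<dots> = (\<Sum>l\<in>F. \<integral>\<^sup>+x. ennreal (indicator (ball 0 r) (l - x) * g (l - x)) \<partial>lborel)"
      unfolding I_nn_integral
      by (intro sum.cong refl nn_integral_lborel_reflect[symmetric] measurable_compose[OF _ measurable_ennreal]
          borel_measurable_times borel_measurable_indicator g_meas) simp
    also have "\<dots> \<le> (\<Sum>l\<in>F. \<integral>\<^sup>+x. ennreal (indicator B x * g (l - x)) \<partial>lborel)"
      using F(2) g_nonneg unfolding B_def
      by (intro sum_mono nn_integral_mono ennreal_leI mult_right_mono
          indicator_ball_diff_le_indicator_double_ball) auto
    also have "\<dots> = (\<integral>\<^sup>+x. (\<Sum>l\<in>F. ennreal (indicator B x * g (l - x))) \<partial>lborel)"
      by (intro nn_integral_sum[symmetric] measurable_compose[OF _ measurable_ennreal]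
          borel_measurable_times borel_measurable_indicator measurable_compose[OF _ g_meas])
        (simp_all add: B_def)
    also have "\<dots> \<le> (\<integral>\<^sup>+x. ennreal K * indicator B x \<partial>lborel)"
      using sums_le
      by (intro nn_integral_mono) (auto simp: indicator_def g_nonneg sum_ennreal intro: ennreal_leI)
    also have "\<dots> = ennreal (K * measure lborel B)"
      using emeasure_lborel_ball_finite[of y "2 * r"] K_nonneg
      by (simp add: B_def nn_integral_cmult_indicator emeasure_eq_ennreal_measure ennreal_mult)
    finally show ?thesis
      using K_nonneg by (simp add: I_def B_def ennreal_le_iff)
  qed
qed

lemma card_le_powr_if_integral_ball_ge:
  fixes g :: "'a::euclidean_space \<Rightarrow> real" and \<alpha> z :: real
  assumes "g \<in> borel_measurable borel" "\<And>t. g t \<ge> 0"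
    and "\<And>x. (\<Sum>l\<in>F. g (l - x)) \<le> K"
    and "finite F" "F \<subseteq> ball y r"
    and r: "r > 0" and z: "z > 0"
    and integral_ge: "z * r powr (DIM('a) - \<alpha>) \<le> (LINT t:ball 0 r|lborel. g t)"
  shows "real (card F) \<le> K * 2 ^ DIM('a) * measure lborel (ball (0::'a) 1) / z * r powr \<alpha>"
proof -
  define P where "P = r powr (DIM('a) - \<alpha>)"
  define V where "V = measure lborel (ball (0::'a) 1)"
  have P_pos: "z * P > 0"
    using r z by (simp add: P_def)
  have "P * r powr \<alpha> = r powr DIM('a)"
    unfolding P_def by (subst powr_add[symmetric]) simp
  also have "\<dots> = r ^ DIM('a)"
    using r by (rule powr_realpow)
  finally have ball_measure: "measure lborel (ball y (2 * r)) = 2 ^ DIM('a) * V * (P * r powr \<alpha>)"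
    using content_ball_conv_unit_ball[of "2 * r" y] r by (simp add: V_def power_mult_distrib)
  have "real (card F) * (z * P) \<le> real (card F) * (LINT t:ball 0 r|lborel. g t)"
    using integral_ge by (simp add: P_def mult_left_mono)
  also have "\<dots> \<le> K * measure lborel (ball y (2 * r))"
    by (rule card_mult_integral_ball_le_of_translate_sums_le) fact+
  also have "\<dots> = K * 2 ^ DIM('a) * V / z * r powr \<alpha> * (z * P)"
    using z by (simp add: ball_measure)
  finally show ?thesis
    using P_pos unfolding V_def by (rule mult_right_le_imp_le)
qed

lemma expo_in_L2:
  assumes "sets \<mu> = sets borel" "finite_measure \<mu>"
  shows "expo x \<in> L2 \<mu>"
proof -
  have "expo x \<in> borel_measurable borel"
    unfolding expo_def by (intro borel_measurable_continuous_onI continuous_intros)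
  then have "expo x \<in> borel_measurable \<mu>"
    using measurable_cong_sets[OF assms(1) refl] by blast
  moreover have "integrable \<mu> (\<lambda>_. 1::real)"
    using finite_measure.integrable_const[OF assms(2)] by blast
  ultimately show ?thesis
    by (simp add: L2_def expo_def)
qed

lemma L2_inner_expo_expo: "L2_inner \<mu> (expo x) (expo l) = fourier_measure \<mu> (l - x)"
proof -
  have "(\<lambda>z. expo x z * cnj (expo l z)) = (\<lambda>z. cis (- 2 * pi * ((l - x) \<bullet> z)))"
    by (simp add: expo_def cis_cnj cis_mult inner_diff_left algebra_simps)
  then show ?thesis
    by (simp add: L2_inner_def fourier_measure_def)
qed

lemma L2_norm_sq_expo: "L2_norm_sq \<mu> (expo x) = measure \<mu> (space \<mu>)"
  by (simp add: L2_norm_sq_def expo_def)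

lemma borel_measurable_fourier_measure:
  fixes \<mu> :: "'a::euclidean_space measure"
  assumes sets_\<mu>: "sets \<mu> = sets borel" and "finite_measure \<mu>"
  shows "fourier_measure \<mu> \<in> borel_measurable borel"
proof -
  interpret finite_measure \<mu> by fact
  have "sets (borel \<Otimes>\<^sub>M \<mu>) = sets (borel :: ('a \<times> 'a) measure)"
    by (simp only: sets_pair_measure_cong[OF refl sets_\<mu>] borel_prod)
  moreover have "(\<lambda>p::'a \<times> 'a. cis (- 2 * pi * (fst p \<bullet> snd p))) \<in> borel_measurable borel"
    by (intro borel_measurable_continuous_onI continuous_intros)
  ultimately have "case_prod (\<lambda>t x. cis (- 2 * pi * (t \<bullet> x))) \<in> borel_measurable (borel \<Otimes>\<^sub>M \<mu>)"
    unfolding split_beta' using measurable_cong_sets[OF _ refl] by blast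
  then show ?thesis
    unfolding fourier_measure_def[abs_def] by (rule borel_measurable_lebesgue_integral)
qed

lemma bessel_system_sum_fourier_translates_bounded:
  fixes \<mu> :: "'a::euclidean_space measure"
  assumes "sets \<mu> = sets borel" "finite_measure \<mu>" "bessel_system \<mu> \<Lambda>"
  obtains K where "\<And>x F. finite F \<Longrightarrow> F \<subseteq> \<Lambda> \<Longrightarrow> (\<Sum>l\<in>F. (cmod (fourier_measure \<mu> (l - x)))\<^sup>2) \<le> K"
proof -
  obtain C where "C > 0" and bessel: "\<forall>f\<in>L2 \<mu>.
      (\<Sum>\<^sub>\<infinity>l\<in>\<Lambda>. ennreal ((cmod (L2_inner \<mu> f (expo l)))\<^sup>2)) \<le> ennreal (C * L2_norm_sq \<mu> f)"
    using assms(3) unfolding bessel_system_def by blast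
  have "(\<Sum>l\<in>F. (cmod (fourier_measure \<mu> (l - x)))\<^sup>2) \<le> C * measure \<mu> (space \<mu>)"
    if F: "finite F" "F \<subseteq> \<Lambda>" for x F
  proof -
    have "ennreal (\<Sum>l\<in>F. (cmod (fourier_measure \<mu> (l - x)))\<^sup>2)
        = (\<Sum>\<^sub>\<infinity>l\<in>F. ennreal ((cmod (fourier_measure \<mu> (l - x)))\<^sup>2))"
      using F by (simp add: sum_ennreal)
    also have "\<dots> \<le> (\<Sum>\<^sub>\<infinity>l\<in>\<Lambda>. ennreal ((cmod (fourier_measure \<mu> (l - x)))\<^sup>2))"
      using F by (intro infsum_mono_neutral nonneg_summable_on_complete) auto
    also have "\<dots> = (\<Sum>\<^sub>\<infinity>l\<in>\<Lambda>. ennreal ((cmod (L2_inner \<mu> (expo x) (expo l)))\<^sup>2))"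
      by (simp add: L2_inner_expo_expo)
    also have "\<dots> \<le> ennreal (C * L2_norm_sq \<mu> (expo x))"
      using bessel expo_in_L2[OF assms(1,2)] by blast
    finally show ?thesis
      using \<open>C > 0\<close> by (simp add: L2_norm_sq_expo ennreal_le_iff)
  qed
  then show ?thesis
    using that by blast
qed

lemma Liminf_gt_zero_imp_eventually_gt:
  fixes f :: "'b \<Rightarrow> real"
  assumes "Liminf F (\<lambda>x. ereal (f x)) > 0"
  obtains z where "z > 0" "eventually (\<lambda>x. z < f x) F"
proof -
  obtain z where "0 < ereal z" "ereal z < Liminf F (\<lambda>x. ereal (f x))"
    using ereal_dense2[OF assms] by blast
  then show ?thesis
    using that less_LiminfD by fastforce
qed

theorem lemma3p1:
  fixes \<mu> :: "'a::euclidean_space measure" and \<alpha> :: real and \<Lambda> :: "'a set"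
  assumes "sets \<mu> = sets borel"
    and "finite_measure \<mu>"
    and "0 \<le> \<alpha>" and "\<alpha> \<le> real DIM('a)"
    and "Liminf at_top (\<lambda>r::real. ereal ((LINT t:ball 0 r|lborel. (cmod (fourier_measure \<mu> t))\<^sup>2)
                                         / r powr (real DIM('a) - \<alpha>))) > 0"
    and "countable \<Lambda>"
    and "bessel_system \<mu> \<Lambda>"
  shows "\<exists>C. \<forall>r\<ge>1. \<forall>x. finite (\<Lambda> \<inter> ball x r) \<and> real (card (\<Lambda> \<inter> ball x r)) \<le> C * r powr \<alpha>"
proof -
  define g where "g t = (cmod (fourier_measure \<mu> t))\<^sup>2" for t
  have g_meas: "g \<in> borel_measurable borel"
    using borel_measurable_fourier_measure[OF assms(1,2)] unfolding g_def by measurable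
  obtain K where sums_le: "\<And>x F. finite F \<Longrightarrow> F \<subseteq> \<Lambda> \<Longrightarrow> (\<Sum>l\<in>F. g (l - x)) \<le> K"
    using bessel_system_sum_fourier_translates_bounded[OF assms(1,2,7)] unfolding g_def by blast
  obtain z where "z > 0"
    and "eventually (\<lambda>r. z < (LINT t:ball 0 r|lborel. g t) / r powr (DIM('a) - \<alpha>)) at_top"
    using Liminf_gt_zero_imp_eventually_gt[OF assms(5)] unfolding g_def by blast
  then obtain R where R: "\<And>r. r \<ge> R \<Longrightarrow> z < (LINT t:ball 0 r|lborel. g t) / r powr (DIM('a) - \<alpha>)"
    by (auto simp: eventually_at_top_linorder)
  have "finite (\<Lambda> \<inter> ball y r) \<and>
      real (card (\<Lambda> \<inter> ball y r)) \<le> K * 2 ^ DIM('a) * measure lborel (ball (0::'a) 1) / z * r powr \<alpha>"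
    if r: "r \<ge> max R 1" for r y
  proof (rule finite_card_le_if_finite_subsets_card_le)
    fix F assume "F \<subseteq> \<Lambda> \<inter> ball y r" "finite F"
    have "z * r powr (DIM('a) - \<alpha>) \<le> (LINT t:ball 0 r|lborel. g t)"
      using R[of r] r by (simp add: pos_less_divide_eq less_imp_le)
    then show "real (card F) \<le> K * 2 ^ DIM('a) * measure lborel (ball (0::'a) 1) / z * r powr \<alpha>"
      using \<open>F \<subseteq> \<Lambda> \<inter> ball y r\<close> \<open>finite F\<close> r \<open>z > 0\<close>
      by (intro card_le_powr_if_integral_ball_ge[OF g_meas] sums_le) (auto simp: g_def)
  qed
  then show ?thesis
    by (rule powr_count_bound_if_eventually[OF assms(3)])
qed

end
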